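(* Suppose that for all positive integers $s,t,k$ with $st \le k^2$ one has $R(s,t) \le R(k,k)$. Then \[ \limsup_{k\to\infty} \frac{\log(R(k,k))}{k} = \limsup_{t\to\infty} \max_{1 \le s \le t} \frac{\log(R(s,t))}{\sqrt{st}}. \]
   Context: All logarithms are in base 2. For positive integers $s,t$, the Ramsey number $R(s,t)$ is the minimum $n$ such that every red/blue edge-coloring of the complete graph $K_n$ contains a red clique on $s$ vertices or a blue clique on $t$ vertices. *)

theory Defs
  imports "HOL-Analysis.Analysis"
begin

text \<open>A red/blue edge-colouring of K_n on vertex set {..<n} is a map
  c :: nat set => bool on 2-element subsets (True = red, False = blue).\<close>

definition has_mono_clique :: "nat \<Rightarrow> (nat set \<Rightarrow> bool) \<Rightarrow> bool \<Rightarrow> nat \<Rightarrow> bool" where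
  "has_mono_clique n c col m \<longleftrightarrow>
     (\<exists>S. S \<subseteq> {..<n} \<and> card S = m \<and>
          (\<forall>x\<in>S. \<forall>y\<in>S. x \<noteq> y \<longrightarrow> c {x, y} = col))"

definition ramsey_prop :: "nat \<Rightarrow> nat \<Rightarrow> nat \<Rightarrow> bool" where
  "ramsey_prop s t n \<longleftrightarrow>
     (\<forall>c :: nat set \<Rightarrow> bool. has_mono_clique n c True s \<or> has_mono_clique n c False t)"

definition ramsey :: "nat \<Rightarrow> nat \<Rightarrow> nat" where
  "ramsey s t = (LEAST n. ramsey_prop s t n)"

end

theory Submission
  imports Defs
begin

text \<open>Taking \<open>s = t\<close> shows that the diagonal sequence is dominated termwise by the maximum.
  Conversely, for \<open>1 \<le> s \<le> t\<close> put \<open>k = \<lceil>\<surd>(st)\<rceil>\<close>: the hypothesis gives \<open>R(s,t) \<le> R(k,k)\<close>,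
  and since \<open>k < \<surd>(st) + 1\<close> with \<open>\<surd>(st) \<ge> \<surd>t\<close>, any eventual bound \<open>log R(k,k) \<le> y k\<close> yields
  \<open>log R(s,t) / \<surd>(st) \<le> y + O(1/\<surd>t)\<close> uniformly in \<open>s\<close>.\<close>

(* Includes n = 0: HOL sets ln 0 = 0. *)
lemma log2_of_nat_nonneg: "0 \<le> log 2 (real n)"
  by (cases "n = 0") (auto simp: log_def)

lemma log2_of_nat_mono:
  assumes "m \<le> n"
  shows "log 2 (real m) \<le> log 2 (real n)"
proof (cases "m = 0")
  case True
  then show ?thesis using log2_of_nat_nonneg[of n] by (simp add: log_def)
next
  case False
  then show ?thesis using assms by (subst log_le_cancel_iff) auto
qed

lemma mult_le_nat_ceiling_sqrt_squared: "s * t \<le> (nat \<lceil>sqrt (real s * real t)\<rceil>)\<^sup>2"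
  by (metis of_nat_mult of_nat_power_le_of_nat_cancel_iff real_nat_ceiling_ge sqrt_le_D)

lemma le_linear_plus_initial_sum:
  fixes L :: "nat \<Rightarrow> real"
  assumes nonneg: "\<And>k. 0 \<le> L k" and "0 \<le> y"
    and tail: "\<And>k. K \<le> k \<Longrightarrow> L k \<le> y * real k"
  shows "L k \<le> y * real k + (\<Sum>j<K. L j)"
proof (cases "K \<le> k")
  case True
  moreover have "0 \<le> (\<Sum>j<K. L j)" by (intro sum_nonneg nonneg)
  ultimately show ?thesis using tail by fastforce
next
  case False
  then have "L k \<le> (\<Sum>j<K. L j)" by (intro member_le_sum) (auto simp: nonneg)
  moreover have "0 \<le> y * real k" using \<open>0 \<le> y\<close> by simp
  ultimately show ?thesis by linarith
qed

lemma limsup_le_of_eventually_le_vanishing: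
  fixes X e :: "nat \<Rightarrow> real"
  assumes "eventually (\<lambda>n. X n \<le> y + e n) sequentially" and "e \<longlonglongrightarrow> 0"
  shows "limsup (\<lambda>n. ereal (X n)) \<le> ereal y"
proof -
  have "limsup (\<lambda>n. ereal (X n)) \<le> limsup (\<lambda>n. ereal (y + e n))"
    using assms(1) by (intro Limsup_mono) (auto elim: eventually_mono)
  also have "\<dots> = ereal y"
    using tendsto_add[OF tendsto_const assms(2), of y] by (intro lim_imp_Limsup) auto
  finally show ?thesis .
qed

lemma ceiling_linear_bound_div_le:
  fixes L :: "nat \<Rightarrow> real"
  assumes L_le: "\<And>k. L k \<le> y * real k + M" and "0 \<le> y" "0 \<le> M" "0 < v" "v \<le> u"
  shows "L (nat \<lceil>u\<rceil>) / u \<le> y + (y + M) / v"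
proof -
  have ceiling_le: "real (nat \<lceil>u\<rceil>) \<le> u + 1"
    using of_int_ceiling_le_add_one[of u] \<open>0 < v\<close> \<open>v \<le> u\<close> by linarith
  have "y * real (nat \<lceil>u\<rceil>) \<le> y * u + y"
    using mult_left_mono[OF ceiling_le \<open>0 \<le> y\<close>] by (simp add: algebra_simps)
  then have "L (nat \<lceil>u\<rceil>) \<le> y * u + (y + M)"
    using L_le[of "nat \<lceil>u\<rceil>"] by linarith
  moreover have "0 < u" using assms by linarith
  ultimately have "L (nat \<lceil>u\<rceil>) / u \<le> (y * u + (y + M)) / u"
    by (intro divide_right_mono) auto
  also have "\<dots> = y + (y + M) / u"
    using \<open>0 < u\<close> by (simp add: add_divide_distrib)
  also have "(y + M) / u \<le> (y + M) / v"
    using assms by (intro divide_left_mono) auto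
  finally show ?thesis by simp
qed

lemma Max_normalized_le_of_linear_bound:
  fixes L :: "nat \<Rightarrow> real" and F :: "nat \<Rightarrow> nat \<Rightarrow> real"
  assumes F_le: "\<And>s. 0 < s \<Longrightarrow> s \<le> t \<Longrightarrow> F s t \<le> L (nat \<lceil>sqrt (real s * real t)\<rceil>)"
    and L_le: "\<And>k. L k \<le> y * real k + M" and "0 \<le> y" "0 \<le> M" "1 \<le> t"
  shows "Max ((\<lambda>s. F s t / sqrt (real s * real t)) ` {1..t}) \<le> y + (y + M) / sqrt (real t)"
proof (rule Max.boundedI)
  fix a
  assume "a \<in> (\<lambda>s. F s t / sqrt (real s * real t)) ` {1..t}"
  then obtain s where "1 \<le> s" "s \<le> t" and a: "a = F s t / sqrt (real s * real t)"
    by auto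
  have "0 < sqrt (real t)" using \<open>1 \<le> t\<close> by simp
  have "real t \<le> real s * real t"
    using mult_right_mono[of 1 "real s" "real t"] \<open>1 \<le> s\<close> by simp
  then have "sqrt (real t) \<le> sqrt (real s * real t)" by (rule real_sqrt_le_mono)
  have "F s t / sqrt (real s * real t)
      \<le> L (nat \<lceil>sqrt (real s * real t)\<rceil>) / sqrt (real s * real t)"
    using F_le \<open>1 \<le> s\<close> \<open>s \<le> t\<close> by (intro divide_right_mono) auto
  also have "\<dots> \<le> y + (y + M) / sqrt (real t)"
    by (rule ceiling_linear_bound_div_le) fact+
  finally show "a \<le> y + (y + M) / sqrt (real t)" unfolding a .
qed (use \<open>1 \<le> t\<close> in auto)

lemma limsup_max_normalized_le_limsup_diagonal:
  fixes L :: "nat \<Rightarrow> real" and F :: "nat \<Rightarrow> nat \<Rightarrow> real"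
  assumes L_nonneg: "\<And>k. 0 \<le> L k"
    and F_le: "\<And>s t. 0 < s \<Longrightarrow> s \<le> t \<Longrightarrow> F s t \<le> L (nat \<lceil>sqrt (real s * real t)\<rceil>)"
  shows "limsup (\<lambda>t. ereal (Max ((\<lambda>s. F s t / sqrt (real s * real t)) ` {1..t})))
         \<le> limsup (\<lambda>k. ereal (L k / real k))"
proof (rule dense_ge)
  fix z
  assume z: "limsup (\<lambda>k. ereal (L k / real k)) < z"
  show "limsup (\<lambda>t. ereal (Max ((\<lambda>s. F s t / sqrt (real s * real t)) ` {1..t}))) \<le> z"
  proof (cases z)
    case (real y)
    have "\<forall>\<^sub>F k in sequentially. L k \<le> y * real k"
      using Limsup_lessD[OF z[unfolded real]] eventually_gt_at_top[of 0]
      by eventually_elim (simp add: divide_less_eq)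
    then obtain K where K: "\<And>k. K \<le> k \<Longrightarrow> L k \<le> y * real k"
      by (auto simp: eventually_sequentially)
    have "0 \<le> y * real (Suc K)"
      using K[of "Suc K"] L_nonneg[of "Suc K"] by linarith
    then have "0 \<le> y" by (simp add: zero_le_mult_iff)
    define M where "M = (\<Sum>j<K. L j)"
    have "0 \<le> M" unfolding M_def by (intro sum_nonneg L_nonneg)
    have L_le: "L k \<le> y * real k + M" for k
      unfolding M_def using L_nonneg \<open>0 \<le> y\<close> K by (rule le_linear_plus_initial_sum)
    have "\<forall>\<^sub>F t in sequentially.
        Max ((\<lambda>s. F s t / sqrt (real s * real t)) ` {1..t}) \<le> y + (y + M) / sqrt (real t)"
      using eventually_ge_at_top[of 1]
      by (rule eventually_mono) (rule Max_normalized_le_of_linear_bound[OF F_le L_le \<open>0 \<le> y\<close> \<open>0 \<le> M\<close>])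
    moreover have "(\<lambda>t. (y + M) / sqrt (real t)) \<longlonglongrightarrow> 0"
      by (intro tendsto_divide_0[OF tendsto_const] filterlim_at_top_imp_at_infinity
          filterlim_compose[OF sqrt_at_top filterlim_real_sequentially])
    ultimately show ?thesis
      unfolding real by (rule limsup_le_of_eventually_le_vanishing)
  qed (use z in auto)
qed

lemma limsup_diagonal_le_limsup_max_normalized:
  fixes F :: "nat \<Rightarrow> nat \<Rightarrow> real"
  shows "limsup (\<lambda>k. ereal (F k k / real k))
         \<le> limsup (\<lambda>t. ereal (Max ((\<lambda>s. F s t / sqrt (real s * real t)) ` {1..t})))"
proof (intro Limsup_mono eventually_mono[OF eventually_ge_at_top[of 1]])
  fix t :: nat
  assume "1 \<le> t"
  have "F t t / real t = F t t / sqrt (real t * real t)" by simp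
  also have "\<dots> \<le> Max ((\<lambda>s. F s t / sqrt (real s * real t)) ` {1..t})"
    using \<open>1 \<le> t\<close> by (intro Max_ge finite_imageI image_eqI[where x = t]) auto
  finally show "ereal (F t t / real t) \<le> ereal (Max ((\<lambda>s. F s t / sqrt (real s * real t)) ` {1..t}))"
    by simp
qed

theorem fact2p3:
  assumes "\<forall>s t k :: nat. 0 < s \<longrightarrow> 0 < t \<longrightarrow> 0 < k \<longrightarrow> s * t \<le> k ^ 2
             \<longrightarrow> ramsey s t \<le> ramsey k k"
  shows "limsup (\<lambda>k::nat. ereal (log 2 (real (ramsey k k)) / real k)) =
         limsup (\<lambda>t::nat. ereal (Max ((\<lambda>s. log 2 (real (ramsey s t)) / sqrt (real s * real t)) ` {1..t})))"
proof (rule antisym[OF limsup_diagonal_le_limsup_max_normalized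
      limsup_max_normalized_le_limsup_diagonal[where L = "\<lambda>k. log 2 (real (ramsey k k))"
        and F = "\<lambda>s t. log 2 (real (ramsey s t))"]])
  show "0 \<le> log 2 (real (ramsey k k))" for k
    by (rule log2_of_nat_nonneg)
  show "log 2 (real (ramsey s t))
      \<le> log 2 (real (ramsey (nat \<lceil>sqrt (real s * real t)\<rceil>) (nat \<lceil>sqrt (real s * real t)\<rceil>)))"
    if "0 < s" "s \<le> t" for s t
  proof (rule log2_of_nat_mono)
    have "0 < t" "0 < nat \<lceil>sqrt (real s * real t)\<rceil>" using that by simp_all
    then show "ramsey s t \<le> ramsey (nat \<lceil>sqrt (real s * real t)\<rceil>) (nat \<lceil>sqrt (real s * real t)\<rceil>)"
      using assms \<open>0 < s\<close> mult_le_nat_ceiling_sqrt_squared by simp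
  qed
qed

end
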